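(* Let $n,k,l$ be nonnegative integers with $k+l\le n$ and let $\alpha,\beta>-1$. For each $i=k+l,k+l+1,\ldots,n$, the modified Jacobi polynomial has the Bernstein representation \[ J_{i,k,l}^{(\alpha,\beta)}(x)=\sum_{h=k}^{n-l}c_{ih}B^n_h(x), \] where \[ c_{ih}=\frac{(\alpha+2l+1)_{i-k-l}}{(i-k-l)!}\binom{n}{h}^{-1}\binom{n-k-l}{h-k}\,Q_{i-k-l}(n-l-h;\,\alpha+2l,\,\beta+2k,\,n-k-l)\qquad(h=k,\ldots,n-l). \]
   Context: Pochhammer symbol: $(a)_0=1$, $(a)_j=a(a+1)\cdots(a+j-1)$. Bernstein polynomials: $B^n_j(x)=\binom nj x^j(1-x)^{n-j}$. Shifted Jacobi polynomials: for $a,b>-1$ and $m\ge0$, $R^{(a,b)}_m(x)=\frac{(a+1)_m}{m!}\sum_{j=0}^m\frac{(-m)_j(m+a+b+1)_j}{j!\,(a+1)_j}(1-x)^j$. Modified Jacobi polynomials: $J_{i,k,l}^{(\alpha,\beta)}(x)=(1-x)^l x^k R^{(\alpha+2l,\beta+2k)}_{i-k-l}(x)$ for $i\ge k+l$. Hahn polynomials: for a nonnegative integer $N$, $a,b>-1$ and $m=0,1,\ldots,N$, $Q_m(x;a,b,N)=\sum_{j=0}^m\frac{(-m)_j(m+a+b+1)_j(-x)_j}{j!\,(a+1)_j\,(-N)_j}$. *)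

theory Defs
  imports Complex_Main
begin

definition bernstein :: "nat \<Rightarrow> nat \<Rightarrow> real \<Rightarrow> real" where
  "bernstein n j x = real (n choose j) * x ^ j * (1 - x) ^ (n - j)"

definition shifted_jacobi :: "real \<Rightarrow> real \<Rightarrow> nat \<Rightarrow> real \<Rightarrow> real" where
  "shifted_jacobi a b m x =
     pochhammer (a + 1) m / fact m *
     (\<Sum>j\<le>m. pochhammer (- real m) j * pochhammer (real m + a + b + 1) j
              / (fact j * pochhammer (a + 1) j) * (1 - x) ^ j)"

text \<open>Modified Jacobi polynomial J_{i,k,l}^(alpha,beta)(x), meaningful for i >= k + l.\<close>
definition mod_jacobi :: "real \<Rightarrow> real \<Rightarrow> nat \<Rightarrow> nat \<Rightarrow> nat \<Rightarrow> real \<Rightarrow> real" where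
  "mod_jacobi \<alpha> \<beta> i k l x =
     (1 - x) ^ l * x ^ k * shifted_jacobi (\<alpha> + 2 * real l) (\<beta> + 2 * real k) (i - k - l) x"

text \<open>Hahn polynomial Q_m(x; a, b, N), meaningful for m <= N.\<close>
definition hahn :: "nat \<Rightarrow> real \<Rightarrow> real \<Rightarrow> real \<Rightarrow> nat \<Rightarrow> real" where
  "hahn m x a b N =
     (\<Sum>j\<le>m. pochhammer (- real m) j * pochhammer (real m + a + b + 1) j * pochhammer (- x) j
             / (fact j * pochhammer (a + 1) j * pochhammer (- real N) j))"

end

theory Submission imports Defs begin

text \<open>
  Put \<open>N = n - k - l\<close>. Degree raising writes \<open>(1 - x)\<^sup>j\<close>, for \<open>j \<le> N\<close>, in the degree-\<open>N\<close>
  Bernstein basis with coefficients \<open>C(N - g, j) / C(N, j)\<close>; since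
  \<open>(-s)\<^sub>j / (-N)\<^sub>j = C(s, j) / C(N, j)\<close>, summing the expansion of the shifted Jacobi
  polynomial in powers of \<open>1 - x\<close> term by term gives exactly Hahn polynomials evaluated
  at \<open>N - g\<close> as Bernstein coefficients. Multiplying by \<open>x\<^sup>k (1 - x)\<^sup>l\<close> then shifts the
  degree-\<open>N\<close> Bernstein basis into the degree-\<open>n\<close> one.
\<close>

lemma pochhammer_minus_of_nat:
  "pochhammer (- real s) j = (-1) ^ j * fact j * real (s choose j)"
  by (simp add: binomial_gbinomial gbinomial_pochhammer)

lemma pochhammer_minus_of_nat_ratio:
  assumes "j \<le> N"
  shows "pochhammer (- real s) j / pochhammer (- real N) j = real (s choose j) / real (N choose j)"
  using assms by (simp add: pochhammer_minus_of_nat)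

lemma choose_mult_choose_diff_commute:
  "(N choose g) * ((N - g) choose j) = (N choose j) * ((N - j) choose g)"
proof (cases "g + j \<le> N")
  case True
  have "(N choose g) * ((N - g) choose j) = (N choose (g + j)) * ((g + j) choose g)"
    using choose_mult[of g "g + j" N] True by simp
  also have "((g + j) choose g) = ((g + j) choose j)"
    using binomial_symmetric[of g "g + j"] by simp
  also have "(N choose (g + j)) * ((g + j) choose j) = (N choose j) * ((N - j) choose g)"
    using choose_mult[of j "g + j" N] True by simp
  finally show ?thesis .
next
  case False
  then have "(N choose g) * ((N - g) choose j) = 0" and "(N choose j) * ((N - j) choose g) = 0"
    by (cases "g \<le> N"; cases "j \<le> N"; simp)+
  then show ?thesis by (simp only:)
qed

lemma bernstein_sum_choose_diff:
  fixes x :: real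
  assumes "j \<le> N"
  shows "(\<Sum>g\<le>N. real ((N - g) choose j) * bernstein N g x) = real (N choose j) * (1 - x) ^ j"
proof -
  have "(\<Sum>g\<le>N. real ((N - g) choose j) * bernstein N g x)
      = real (N choose j) * (\<Sum>g\<le>N - j. real ((N - j) choose g) * x ^ g * (1 - x) ^ (N - g))"
  proof -
    have "(\<Sum>g\<le>N. real ((N - g) choose j) * bernstein N g x)
        = (\<Sum>g\<le>N. real (N choose j) * (real ((N - j) choose g) * x ^ g * (1 - x) ^ (N - g)))"
      unfolding bernstein_def
      by (rule sum.cong) (simp_all add: of_nat_mult[symmetric] choose_mult_choose_diff_commute
          mult_ac del: of_nat_mult)
    also have "\<dots> = real (N choose j) * (\<Sum>g\<le>N. real ((N - j) choose g) * x ^ g * (1 - x) ^ (N - g))"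
      by (simp add: sum_distrib_left)
    also have "(\<Sum>g\<le>N. real ((N - j) choose g) * x ^ g * (1 - x) ^ (N - g))
        = (\<Sum>g\<le>N - j. real ((N - j) choose g) * x ^ g * (1 - x) ^ (N - g))"
      by (rule sum.mono_neutral_right) auto
    finally show ?thesis .
  qed
  also have "(\<Sum>g\<le>N - j. real ((N - j) choose g) * x ^ g * (1 - x) ^ (N - g))
      = (1 - x) ^ j * (\<Sum>g\<le>N - j. real ((N - j) choose g) * x ^ g * (1 - x) ^ (N - j - g))"
    unfolding sum_distrib_left
  proof (rule sum.cong[OF refl])
    fix g assume "g \<in> {..N - j}"
    then have "N - g = j + (N - j - g)" using assms by auto
    then show "real ((N - j) choose g) * x ^ g * (1 - x) ^ (N - g)
        = (1 - x) ^ j * (real ((N - j) choose g) * x ^ g * (1 - x) ^ (N - j - g))"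
      by (simp add: power_add)
  qed
  also have "(\<Sum>g\<le>N - j. real ((N - j) choose g) * x ^ g * (1 - x) ^ (N - j - g)) = 1"
    using binomial_ring[of x "1 - x" "N - j"] by (simp add: mult_ac)
  finally show ?thesis by simp
qed

lemma power_one_minus_bernstein_expansion:
  fixes x :: real
  assumes "j \<le> N"
  shows "(1 - x) ^ j = (\<Sum>g\<le>N. real ((N - g) choose j) / real (N choose j) * bernstein N g x)"
  using assms bernstein_sum_choose_diff[OF assms, of x]
  by (simp add: sum_divide_distrib[symmetric] del: of_nat_sum)

definition jacobi_coeff :: "real \<Rightarrow> real \<Rightarrow> nat \<Rightarrow> nat \<Rightarrow> real" where
  "jacobi_coeff a b m j =
     pochhammer (- real m) j * pochhammer (real m + a + b + 1) j / (fact j * pochhammer (a + 1) j)"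

lemma shifted_jacobi_eq:
  "shifted_jacobi a b m x = pochhammer (a + 1) m / fact m * (\<Sum>j\<le>m. jacobi_coeff a b m j * (1 - x) ^ j)"
  unfolding shifted_jacobi_def jacobi_coeff_def ..

lemma hahn_of_nat_eq:
  assumes "m \<le> N"
  shows "hahn m (real s) a b N = (\<Sum>j\<le>m. jacobi_coeff a b m j * (real (s choose j) / real (N choose j)))"
  unfolding hahn_def
proof (rule sum.cong[OF refl])
  fix j assume "j \<in> {..m}"
  then have "j \<le> N" using assms by simp
  have "pochhammer (- real m) j * pochhammer (real m + a + b + 1) j * pochhammer (- real s) j
        / (fact j * pochhammer (a + 1) j * pochhammer (- real N) j)
      = jacobi_coeff a b m j * (pochhammer (- real s) j / pochhammer (- real N) j)"
    unfolding jacobi_coeff_def by simp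
  also have "\<dots> = jacobi_coeff a b m j * (real (s choose j) / real (N choose j))"
    using pochhammer_minus_of_nat_ratio[OF \<open>j \<le> N\<close>] by simp
  finally show "pochhammer (- real m) j * pochhammer (real m + a + b + 1) j * pochhammer (- real s) j
        / (fact j * pochhammer (a + 1) j * pochhammer (- real N) j)
      = jacobi_coeff a b m j * (real (s choose j) / real (N choose j))" .
qed

lemma shifted_jacobi_bernstein_expansion:
  assumes "m \<le> N"
  shows "shifted_jacobi a b m x =
    (\<Sum>g\<le>N. pochhammer (a + 1) m / fact m * hahn m (real (N - g)) a b N * bernstein N g x)"
proof -
  have "(\<Sum>j\<le>m. jacobi_coeff a b m j * (1 - x) ^ j)
      = (\<Sum>j\<le>m. \<Sum>g\<le>N. jacobi_coeff a b m j * (real ((N - g) choose j) / real (N choose j))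
                          * bernstein N g x)"
  proof (rule sum.cong[OF refl])
    fix j assume "j \<in> {..m}"
    then have "j \<le> N" using assms by simp
    then show "jacobi_coeff a b m j * (1 - x) ^ j
        = (\<Sum>g\<le>N. jacobi_coeff a b m j * (real ((N - g) choose j) / real (N choose j))
                          * bernstein N g x)"
      by (simp add: power_one_minus_bernstein_expansion[of j N] sum_distrib_left mult.assoc)
  qed
  also have "\<dots> = (\<Sum>g\<le>N. \<Sum>j\<le>m. jacobi_coeff a b m j * (real ((N - g) choose j) / real (N choose j))
                          * bernstein N g x)"
    by (rule sum.swap)
  also have "\<dots> = (\<Sum>g\<le>N. hahn m (real (N - g)) a b N * bernstein N g x)"
    by (simp only: hahn_of_nat_eq[OF assms] sum_distrib_right)
  finally show ?thesis
    by (simp add: shifted_jacobi_eq sum_distrib_left mult_ac)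
qed

lemma bernstein_mult_monomials:
  fixes x :: real
  assumes "g \<le> N"
  shows "x ^ k * (1 - x) ^ l * bernstein N g x
       = real (N choose g) / real ((N + k + l) choose (g + k)) * bernstein (N + k + l) (g + k) x"
proof -
  have "real ((N + k + l) choose (g + k)) \<noteq> 0" using assms by simp
  moreover have "N + k + l - (g + k) = l + (N - g)" using assms by simp
  ultimately have "real (N choose g) / real ((N + k + l) choose (g + k)) * bernstein (N + k + l) (g + k) x
      = real (N choose g) * x ^ (g + k) * (1 - x) ^ (l + (N - g))"
    unfolding bernstein_def by simp
  moreover have "x ^ k * (1 - x) ^ l * bernstein N g x
      = real (N choose g) * x ^ (g + k) * (1 - x) ^ (l + (N - g))"
    unfolding bernstein_def power_add by (simp only: mult_ac)
  ultimately show ?thesis by simp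
qed

theorem lemma1:
  fixes n k l i :: nat and \<alpha> \<beta> x :: real
  assumes "k + l \<le> n" and "\<alpha> > -1" and "\<beta> > -1"
    and "k + l \<le> i" and "i \<le> n"
  shows "mod_jacobi \<alpha> \<beta> i k l x =
    (\<Sum>h = k..n - l.
        (pochhammer (\<alpha> + 2 * real l + 1) (i - k - l) / fact (i - k - l)
         / real (n choose h) * real ((n - k - l) choose (h - k))
         * hahn (i - k - l) (real (n - l - h)) (\<alpha> + 2 * real l) (\<beta> + 2 * real k) (n - k - l))
        * bernstein n h x)"
    (is "_ = sum ?F _")
proof -
  define N where "N = n - k - l"
  define m where "m = i - k - l"
  define a where "a = \<alpha> + 2 * real l"
  define b where "b = \<beta> + 2 * real k"
  define P where "P = pochhammer (a + 1) m / fact m"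
  have n: "n = N + k + l" and "m \<le> N"
    using assms unfolding N_def m_def by simp_all
  have "mod_jacobi \<alpha> \<beta> i k l x = x ^ k * (1 - x) ^ l * shifted_jacobi a b m x"
    unfolding mod_jacobi_def a_def b_def m_def by (simp add: mult_ac)
  also have "\<dots> = (\<Sum>g\<le>N. P * hahn m (real (N - g)) a b N * (x ^ k * (1 - x) ^ l * bernstein N g x))"
    unfolding shifted_jacobi_bernstein_expansion[OF \<open>m \<le> N\<close>] sum_distrib_left
    by (simp add: P_def mult_ac)
  also have "\<dots> = (\<Sum>g\<le>N. ?F (g + k))"
  proof (rule sum.cong[OF refl])
    fix g assume "g \<in> {..N}"
    then have "g \<le> N" by simp
    have "n - l - (g + k) = N - g" "n - k - l = N" "g + k - k = g"
      using n by simp_all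
    then show "P * hahn m (real (N - g)) a b N * (x ^ k * (1 - x) ^ l * bernstein N g x) = ?F (g + k)"
      unfolding bernstein_mult_monomials[OF \<open>g \<le> N\<close>] n[symmetric]
      by (simp add: P_def m_def a_def b_def)
  qed
  also have "\<dots> = sum ?F {k..n - l}"
    using sum.shift_bounds_cl_nat_ivl[of ?F 0 k N] by (simp add: atLeast0AtMost n)
  finally show ?thesis .
qed

end
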